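(* In the setting described in the context, for every $\varepsilon>0$ and every $\delta\in(0,\eta]$, $$\|\nabla\varphi_0\|_{L^2(D_\delta)}^2\le \varepsilon\,\|\nabla u^0_\delta\|_{L^1(\Omega)},$$ where $\varphi_0\in\mathcal{V}^\delta$ is the solution of the weighted Dirichlet problem defined in the context.
   Context: Let $\Omega\subset\mathbb{R}^d$ be a bounded connected Lipschitz domain; $\langle\cdot,\cdot\rangle$ and $\|\cdot\|$ denote the $L^2(\Omega)$ inner product and norm, $|\cdot|$ the Euclidean norm, $\mathcal{H}^{d-1}$ the $(d-1)$-dimensional Hausdorff measure. Weight: for each $\varepsilon>0$, $\hat\mu_\varepsilon:[0,\infty)\to\mathbb{R}$ is non-increasing with $\hat\mu_\varepsilon(0)=\varepsilon^{-1}$, $\hat\mu_\varepsilon(t)>0$ and $t\hat\mu_\varepsilon(t)\le1$ for all $t\ge0$; for $w$ with $\nabla w\in L^\infty(\Omega)$ put $\mu_\varepsilon[w](x)=\hat\mu_\varepsilon(|\nabla w(x)|)$. Medium: $u=u^0+\widetilde u$ with $u^0=\sum_{m=1}^M\hat u^{0,m}\chi^{0,m}$, where $\hat u^{0,m}\in\mathbb{R}$ and $\chi^{0,m}$ is the characteristic function of $A^{0,m}$, the $A^{0,m}$ being mutually disjoint connected open sets with $\overline\Omega\subset\overline{\bigcup_m A^{0,m}}$ and $\mathcal{H}^{d-1}(\partial A^{0,m}\cap\partial\Omega)>0$; and $\widetilde u=\sum_{k=1}^K\hat u^k\chi^k$ with $\hat u^k\neq0$, $\chi^k$ the characteristic function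 of a connected open set $A^k$ compactly contained in $\Omega\setminus S$, where $S=(\bigcup_m\partial A^{0,m})\setminus\partial\Omega$; the boundaries $\partial A^1,\dots,\partial A^K$ are mutually disjoint. For $\delta>0$: $S_\delta=\{x\in\Omega:\operatorname{dist}(x,S)<\delta\}$, $U^k_\delta=\{x\in\Omega:\operatorname{dist}(x,\partial A^k)<\delta\}$, $U_\delta=\bigcup_{k=1}^K U^k_\delta$, $D_\delta=\Omega\setminus\overline{U_\delta\cup S_\delta}$, $A^k_\delta=(\Omega\setminus\overline{U^k_\delta})\cap A^k$, $A_\delta=\bigcup_k A^k_\delta$. Approximation: $\mathcal{V}^\delta\subset H^1(\Omega)$ is a closed subspace, $\mathcal{V}^\delta_0=\mathcal{V}^\delta\cap H^1_0(\Omega)$; $\chi^{0,m}_\delta\in\mathcal{V}^\delta$ and $\chi^k_\delta\in\mathcal{V}^\delta_0$ converge in $L^2(\Omega)$ to $\chi^{0,m}$, $\chi^k$ as $\delta\to0$; $u^0_\delta=\sum_m\hat u^{0,m}\chi^{0,m}_\delta$, $\widetilde u_\delta=\sum_k\hat u^k\chi^k_\delta$, $u_\delta=u^0_\delta+\widetilde u_\delta$. Standing assumptions: $\eta>0$ is such that $A^k_\eta\neq\emptyset$ for all $k$, $\overline{S_\eta}\cap\overline{U_\eta}=\emptyset$, $\overline{U^k_\eta}\cap\overline{U^j_\eta}=\emptyset$ for $k\ne j$, and every connected component $E$ of $D_\eta\setminus A_\eta$ satisfies $\mathcal{H}^{d-1}(\partial E\cap\partial\Omega)>0$. For all $\delta\in(0,\eta]$: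 $\nabla\chi^{0,m}_\delta\in L^\infty(\Omega)$ with $\operatorname{supp}\nabla\chi^{0,m}_\delta\subset\overline{S_\delta}$, and $\nabla\chi^k_\delta\in L^\infty(\Omega)$ with $\operatorname{supp}\nabla\chi^k_\delta\subset\overline{U^k_\delta}$. Problem: $B[v,w]=\langle\mu_\varepsilon[u_\delta]\nabla v,\nabla w\rangle$; $\varphi_0\in\mathcal{V}^\delta$ satisfies $B[\varphi_0,v]=0$ for all $v\in\mathcal{V}^\delta_0$ and $\varphi_0=u_\delta$ on $\partial\Omega$ (i.e. $\varphi_0-u_\delta\in\mathcal{V}^\delta_0$). *)

theory Defs
  imports "HOL-Analysis.Analysis"
begin

fun Ck_fun :: "nat \<Rightarrow> ('a::euclidean_space \<Rightarrow> real) \<Rightarrow> bool" where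
  "Ck_fun 0 f = continuous_on UNIV f"
| "Ck_fun (Suc n) f = ((\<forall>x. f differentiable (at x)) \<and>
      (\<forall>i\<in>Basis. Ck_fun n (\<lambda>x. frechet_derivative f (at x) i)))"

definition smooth_fun :: "('a::euclidean_space \<Rightarrow> real) \<Rightarrow> bool" where
  "smooth_fun f \<longleftrightarrow> (\<forall>n. Ck_fun n f)"

definition grad :: "('a::euclidean_space \<Rightarrow> real) \<Rightarrow> 'a \<Rightarrow> 'a" where
  "grad f x = (\<Sum>i\<in>Basis. frechet_derivative f (at x) i *\<^sub>R i)"

definition test_function :: "'a::euclidean_space set \<Rightarrow> ('a \<Rightarrow> real) \<Rightarrow> bool" where
  "test_function \<Omega> \<phi> \<longleftrightarrow> smooth_fun \<phi> \<and>
     compact (closure {x. \<phi> x \<noteq> 0}) \<and> closure {x. \<phi> x \<noteq> 0} \<subseteq> \<Omega>"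

definition weak_grad :: "'a::euclidean_space set \<Rightarrow> ('a \<Rightarrow> real) \<Rightarrow> ('a \<Rightarrow> 'a) \<Rightarrow> bool" where
  "weak_grad \<Omega> v g \<longleftrightarrow>
     (\<forall>K. compact K \<and> K \<subseteq> \<Omega> \<longrightarrow> set_integrable lebesgue K v \<and> set_integrable lebesgue K g) \<and>
     (\<forall>\<phi>. test_function \<Omega> \<phi> \<longrightarrow> (\<forall>i\<in>Basis.
        (LINT x:\<Omega>|lebesgue. v x * (grad \<phi> x \<bullet> i)) = - (LINT x:\<Omega>|lebesgue. (g x \<bullet> i) * \<phi> x)))"

definition L2_fun :: "'a::euclidean_space set \<Rightarrow> ('a \<Rightarrow> real) \<Rightarrow> bool" where
  "L2_fun \<Omega> f \<longleftrightarrow> set_borel_measurable lebesgue \<Omega> f \<and> set_integrable lebesgue \<Omega> (\<lambda>x. (f x)\<^sup>2)"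

definition L2_vec :: "'a::euclidean_space set \<Rightarrow> ('a \<Rightarrow> 'a) \<Rightarrow> bool" where
  "L2_vec \<Omega> g \<longleftrightarrow> set_borel_measurable lebesgue \<Omega> g \<and> set_integrable lebesgue \<Omega> (\<lambda>x. (norm (g x))\<^sup>2)"

definition H1 :: "'a::euclidean_space set \<Rightarrow> ('a \<Rightarrow> real) set" where
  "H1 \<Omega> = {v. L2_fun \<Omega> v \<and> (\<exists>g. weak_grad \<Omega> v g \<and> L2_vec \<Omega> g)}"

definition H1_converges ::
  "'a::euclidean_space set \<Rightarrow> (nat \<Rightarrow> 'a \<Rightarrow> real) \<Rightarrow> (nat \<Rightarrow> 'a \<Rightarrow> 'a) \<Rightarrow> ('a \<Rightarrow> real) \<Rightarrow> ('a \<Rightarrow> 'a) \<Rightarrow> bool" where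
  "H1_converges \<Omega> f gf v gv \<longleftrightarrow>
     (\<forall>n. weak_grad \<Omega> (f n) (gf n)) \<and> weak_grad \<Omega> v gv \<and>
     (\<lambda>n. LINT x:\<Omega>|lebesgue. (f n x - v x)\<^sup>2) \<longlonglongrightarrow> 0 \<and>
     (\<lambda>n. LINT x:\<Omega>|lebesgue. (norm (gf n x - gv x))\<^sup>2) \<longlonglongrightarrow> 0"

definition H1_0 :: "'a::euclidean_space set \<Rightarrow> ('a \<Rightarrow> real) set" where
  "H1_0 \<Omega> = {v \<in> H1 \<Omega>. \<exists>\<phi> gv. (\<forall>n. test_function \<Omega> (\<phi> n)) \<and>
       H1_converges \<Omega> \<phi> (\<lambda>n. grad (\<phi> n)) v gv}"

definition closed_H1_subspace :: "'a::euclidean_space set \<Rightarrow> ('a \<Rightarrow> real) set \<Rightarrow> bool" where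
  "closed_H1_subspace \<Omega> V \<longleftrightarrow> V \<subseteq> H1 \<Omega> \<and> (\<lambda>x. 0) \<in> V \<and>
     (\<forall>v\<in>V. \<forall>w\<in>V. (\<lambda>x. v x + w x) \<in> V) \<and> (\<forall>c. \<forall>v\<in>V. (\<lambda>x. c * v x) \<in> V) \<and>
     (\<forall>f gf v gv. (\<forall>n. f n \<in> V) \<and> v \<in> H1 \<Omega> \<and> H1_converges \<Omega> f gf v gv \<longrightarrow> v \<in> V)"

text \<open>Hausdorff measure H^s (without the normalising constant, which is irrelevant
  for the positivity statements used here).\<close>
definition hausdorff_pre :: "nat \<Rightarrow> real \<Rightarrow> 'a::metric_space set \<Rightarrow> ennreal" where
  "hausdorff_pre s r E = (INF C \<in> {C :: nat \<Rightarrow> 'a set. E \<subseteq> (\<Union>n. C n) \<and> (\<forall>n. bounded (C n) \<and> diameter (C n) \<le> r)}.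
       (\<Sum>n. ennreal (if C n = {} then 0 else diameter (C n) ^ s)))"

definition hausdorff_measure :: "nat \<Rightarrow> 'a::metric_space set \<Rightarrow> ennreal" where
  "hausdorff_measure s E = (SUP r \<in> {0<..}. hausdorff_pre s r E)"

text \<open>Lipschitz domain: open, and near every boundary point, after choosing a unit
  "vertical" direction e, the domain is the subgraph of a Lipschitz function of the
  coordinates orthogonal to e.\<close>
definition lipschitz_domain :: "'a::euclidean_space set \<Rightarrow> bool" where
  "lipschitz_domain \<Omega> \<longleftrightarrow> open \<Omega> \<and> (\<forall>p\<in>frontier \<Omega>. \<exists>r>0. \<exists>e L f. norm e = 1 \<and>
      L-lipschitz_on UNIV (f :: 'a \<Rightarrow> real) \<and>
      \<Omega> \<inter> ball p r = {x \<in> ball p r. x \<bullet> e < f (x - (x \<bullet> e) *\<^sub>R e)})"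

text \<open>{x in Omega. dist(x,T) < delta}, written so that it is empty when T is empty.\<close>
definition nbhd :: "'a::metric_space set \<Rightarrow> 'a set \<Rightarrow> real \<Rightarrow> 'a set" where
  "nbhd \<Omega> T \<delta> = {x \<in> \<Omega>. \<exists>y\<in>T. dist x y < \<delta>}"

end

theory Submission
  imports Defs "HOL-Computational_Algebra.Polynomial"
begin

text \<open>
  Testing the weighted equation with \<open>\<phi>\<^sub>0 - u\<^sub>\<delta>\<close> and with every \<open>\<chi>\<^sup>k\<^sub>\<delta> \<in> \<V>\<^sub>0\<close> shows that
  \<open>\<nabla>\<phi>\<^sub>0\<close> is \<open>\<mu>\<close>-orthogonal to \<open>\<nabla>(\<phi>\<^sub>0 - u\<^sup>0\<^sub>\<delta>)\<close>, where \<open>\<mu> = \<mu>\<^sub>\<epsilon>[u\<^sub>\<delta>]\<close>; by Cauchy-Schwarz,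
  \<open>\<integral>\<mu>|\<nabla>\<phi>\<^sub>0|\<^sup>2 \<le> \<integral>\<mu>|\<nabla>u\<^sup>0\<^sub>\<delta>|\<^sup>2\<close>. The gradients of the \<open>\<chi>\<^sup>0\<^sup>,\<^sup>m\<^sub>\<delta>\<close> and of the \<open>\<chi>\<^sup>k\<^sub>\<delta>\<close> live on the
  disjoint sets \<open>closure S\<^sub>\<delta>\<close> and \<open>closure U\<^sub>\<delta>\<close>, so \<open>\<mu> = \<mu>\<^sub>\<epsilon>(|\<nabla>u\<^sup>0\<^sub>\<delta>|)\<close> wherever \<open>\<nabla>u\<^sup>0\<^sub>\<delta> \<noteq> 0\<close>,
  and \<open>t \<mu>\<^sub>\<epsilon>(t) \<le> 1\<close> gives \<open>\<mu>|\<nabla>u\<^sup>0\<^sub>\<delta>|\<^sup>2 \<le> |\<nabla>u\<^sup>0\<^sub>\<delta>|\<close>. On \<open>D\<^sub>\<delta>\<close> both gradients vanish, so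
  \<open>\<mu> = \<mu>\<^sub>\<epsilon>(0) = 1/\<epsilon>\<close> there.

  The weak gradient of \<open>\<phi>\<^sub>0\<close> is an arbitrary representative, so its square integrability
  needs uniqueness of weak gradients, i.e. the fundamental lemma of the calculus of variations;
  its proof tests against smooth bumps converging to indicators of boxes.
\<close>

section \<open>Smooth bump functions on boxes\<close>

text \<open>The polynomial factor makes this family closed under differentiation.\<close>
definition flat_exp :: "real poly \<Rightarrow> real \<Rightarrow> real" where
  "flat_exp P s = (if s > 0 then poly P (1/s) * exp (-1/s) else 0)"

text \<open>\<open>d/ds (P(1/s) e^(-1/s)) = Q(1/s) e^(-1/s)\<close> with \<open>Q(y) = y\<^sup>2 (P(y) - P'(y))\<close>.\<close>
definition flat_exp_deriv :: "real poly \<Rightarrow> real poly" where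
  "flat_exp_deriv P = [:0, 0, 1:] * (P - pderiv P)"

lemma tendsto_poly_div_exp_at_top: "((\<lambda>y. poly Q y / exp y) \<longlongrightarrow> (0::real)) at_top"
proof -
  have "((\<lambda>y. \<Sum>i\<le>degree Q. coeff Q i * (y ^ i / exp y)) \<longlongrightarrow> (\<Sum>i\<le>degree Q. coeff Q i * 0)) at_top"
    by (intro tendsto_sum tendsto_mult tendsto_const tendsto_power_div_exp_0)
  moreover have "(\<lambda>y. \<Sum>i\<le>degree Q. coeff Q i * (y ^ i / exp y)) = (\<lambda>y. poly Q y / exp y)"
    by (auto simp: poly_altdef sum_divide_distrib)
  ultimately show ?thesis by simp
qed

lemma flat_exp_has_real_derivative_0: "(flat_exp P has_real_derivative 0) (at 0)"
proof -
  have "((\<lambda>y. poly ([:0, 1:] * P) y / exp y) \<longlongrightarrow> (0::real)) at_top"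
    by (rule tendsto_poly_div_exp_at_top)
  then have "((\<lambda>y. flat_exp P (inverse y) / inverse y) \<longlongrightarrow> (0::real)) at_top"
  proof (rule tendsto_cong[THEN iffD1, rotated])
    show "\<forall>\<^sub>F y in at_top. poly ([:0, 1:] * P) y / exp y = flat_exp P (inverse y) / inverse y"
      using eventually_gt_at_top[of 0]
      by eventually_elim (auto simp: flat_exp_def exp_minus field_simps)
  qed
  then have right: "((\<lambda>h. flat_exp P h / h) \<longlongrightarrow> 0) (at_right 0)"
    by (simp add: filterlim_at_right_to_top)
  have "\<forall>\<^sub>F h in at_left (0::real). flat_exp P h / h = 0"
    by (auto simp: eventually_at_left_field flat_exp_def intro!: exI[of _ "-1"])
  then have left: "((\<lambda>h. flat_exp P h / h) \<longlongrightarrow> 0) (at_left 0)"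
    by (rule tendsto_eventually)
  from left right have "((\<lambda>h. flat_exp P h / h) \<longlongrightarrow> 0) (at 0)"
    by (simp add: filterlim_at_split)
  then show ?thesis by (simp add: DERIV_def flat_exp_def)
qed

lemma flat_exp_has_real_derivative:
  "(flat_exp P has_real_derivative flat_exp (flat_exp_deriv P) s) (at s)"
proof (cases "0 < s")
  case True
  have "((\<lambda>s. poly P (1/s) * exp (-1/s)) has_real_derivative flat_exp (flat_exp_deriv P) s) (at s)"
    using True
    by (auto intro!: derivative_eq_intros DERIV_chain2[OF poly_DERIV]
          simp: flat_exp_def flat_exp_deriv_def power2_eq_square field_simps)
  then show ?thesis
    by (rule has_field_derivative_transform_within_open[of _ _ _ "{0<..}"])
      (use True in \<open>auto simp: flat_exp_def\<close>)
next
  case False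
  show ?thesis
  proof (cases "s = 0")
    case True
    then show ?thesis using flat_exp_has_real_derivative_0[of P] by (simp add: flat_exp_def)
  next
    case False
    with \<open>\<not> 0 < s\<close> have "s < 0" by simp
    have "((\<lambda>s. 0) has_real_derivative flat_exp (flat_exp_deriv P) s) (at s)"
      using \<open>s < 0\<close> by (simp add: flat_exp_def)
    then show ?thesis
      by (rule has_field_derivative_transform_within_open[of _ _ _ "{..<0}"])
        (use \<open>s < 0\<close> in \<open>auto simp: flat_exp_def\<close>)
  qed
qed

inductive_set flat_exp_comb :: "real poly \<Rightarrow> (real \<Rightarrow> real) set" for q where
  flat_exp_combI: "(\<lambda>t. flat_exp P (poly q t) * poly R t) \<in> flat_exp_comb q"
| flat_exp_comb_add: "f \<in> flat_exp_comb q \<Longrightarrow> g \<in> flat_exp_comb q \<Longrightarrow> (\<lambda>t. f t + g t) \<in> flat_exp_comb q"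

lemma flat_exp_comb_has_derivative:
  "f \<in> flat_exp_comb q \<Longrightarrow> \<exists>f'\<in>flat_exp_comb q. \<forall>t. (f has_real_derivative f' t) (at t)"
proof (induction rule: flat_exp_comb.induct)
  case (flat_exp_combI P R)
  let ?f' = "\<lambda>t. flat_exp (flat_exp_deriv P) (poly q t) * poly (pderiv q * R) t
               + flat_exp P (poly q t) * poly (pderiv R) t"
  have "?f' \<in> flat_exp_comb q" by (intro flat_exp_comb.intros)
  moreover have "((\<lambda>t. flat_exp P (poly q t) * poly R t) has_real_derivative ?f' t) (at t)" for t
    by (auto intro!: derivative_eq_intros DERIV_chain2[OF flat_exp_has_real_derivative]
        simp: algebra_simps)
  ultimately show ?case by (intro bexI[of _ ?f']) simp_all
next
  case (flat_exp_comb_add f g)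
  then obtain f' g' where "f' \<in> flat_exp_comb q" "g' \<in> flat_exp_comb q"
    "\<And>t. (f has_real_derivative f' t) (at t)" "\<And>t. (g has_real_derivative g' t) (at t)"
    by blast
  then show ?case
    by (intro bexI[of _ "\<lambda>t. f' t + g' t"]) (auto intro!: derivative_eq_intros flat_exp_comb.intros)
qed

definition coord_prod :: "('a::euclidean_space \<Rightarrow> real \<Rightarrow> real) \<Rightarrow> 'a \<Rightarrow> real" where
  "coord_prod F x = (\<Prod>i\<in>Basis. F i (x \<bullet> i))"

lemma coord_prod_has_derivative:
  fixes F :: "'a::euclidean_space \<Rightarrow> real \<Rightarrow> real"
  assumes "\<And>i t. i \<in> Basis \<Longrightarrow> (F i has_real_derivative D i t) (at t)"
  shows "(coord_prod F has_derivative
           (\<lambda>y. \<Sum>i\<in>Basis. (y \<bullet> i * D i (x \<bullet> i)) * (\<Prod>j\<in>Basis - {i}. F j (x \<bullet> j)))) (at x)"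
proof -
  have "((\<lambda>x. F i (x \<bullet> i)) has_derivative (\<lambda>y. y \<bullet> i * D i (x \<bullet> i))) (at x)" if "i \<in> Basis" for i
  proof -
    have "(F i \<circ> (\<lambda>x. x \<bullet> i) has_derivative (\<lambda>h. h * D i (x \<bullet> i)) \<circ> (\<lambda>y. y \<bullet> i)) (at x)"
      by (rule diff_chain_at[OF bounded_linear_imp_has_derivative[OF bounded_linear_inner_left]])
        (use assms[OF that, of "x \<bullet> i"] in \<open>simp add: has_field_derivative_def mult_commute_abs\<close>)
    then show ?thesis by (simp add: o_def)
  qed
  then show ?thesis unfolding coord_prod_def by (intro has_derivative_prod) auto
qed

lemma frechet_derivative_coord_prod_Basis:
  fixes F :: "'a::euclidean_space \<Rightarrow> real \<Rightarrow> real"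
  assumes "\<And>i t. i \<in> Basis \<Longrightarrow> (F i has_real_derivative D i t) (at t)" and j: "j \<in> Basis"
  shows "frechet_derivative (coord_prod F) (at x) j = coord_prod (F(j := D j)) x"
proof -
  have "frechet_derivative (coord_prod F) (at x) j
      = (\<Sum>i\<in>Basis. (j \<bullet> i * D i (x \<bullet> i)) * (\<Prod>k\<in>Basis - {i}. F k (x \<bullet> k)))"
    by (simp add: frechet_derivative_at[OF coord_prod_has_derivative[OF assms(1)], symmetric])
  also have "\<dots> = D j (x \<bullet> j) * (\<Prod>k\<in>Basis - {j}. F k (x \<bullet> k))"
    using j by (simp add: inner_Basis if_distrib[of "\<lambda>c. c * _"] sum.delta cong: if_cong)
  also have "\<dots> = coord_prod (F(j := D j)) x"
    unfolding coord_prod_def using j by (simp add: prod.remove[of Basis j])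
  finally show ?thesis .
qed

lemma coord_prod_flat_exp_comb_derivative:
  fixes F :: "'a::euclidean_space \<Rightarrow> real \<Rightarrow> real"
  assumes "\<forall>i\<in>Basis. F i \<in> flat_exp_comb (Q i)"
  obtains D where "\<forall>i\<in>Basis. D i \<in> flat_exp_comb (Q i)"
    and "\<And>x. coord_prod F differentiable (at x)"
    and "\<And>j x. j \<in> Basis \<Longrightarrow> frechet_derivative (coord_prod F) (at x) j = coord_prod (F(j := D j)) x"
proof -
  have "\<forall>i\<in>Basis. \<exists>f'. f' \<in> flat_exp_comb (Q i) \<and> (\<forall>t. (F i has_real_derivative f' t) (at t))"
    using assms flat_exp_comb_has_derivative by blast
  then obtain D where D: "\<forall>i\<in>Basis. D i \<in> flat_exp_comb (Q i)"
    and dD: "\<And>i t. i \<in> Basis \<Longrightarrow> (F i has_real_derivative D i t) (at t)"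
    by (metis bchoice)
  show thesis
    using that[OF D] coord_prod_has_derivative[of F D, OF dD]
      frechet_derivative_coord_prod_Basis[of F D, OF dD]
    unfolding differentiable_def by blast
qed

lemma Ck_fun_coord_prod:
  fixes F :: "'a::euclidean_space \<Rightarrow> real \<Rightarrow> real"
  shows "\<forall>i\<in>Basis. F i \<in> flat_exp_comb (Q i) \<Longrightarrow> Ck_fun n (coord_prod F)"
proof (induction n arbitrary: F)
  case 0
  then have "\<And>x. coord_prod F differentiable (at x)"
    by (metis coord_prod_flat_exp_comb_derivative)
  then show ?case
    by (auto intro!: continuous_at_imp_continuous_on differentiable_imp_continuous_within)
next
  case (Suc n)
  obtain D where D: "\<forall>i\<in>Basis. D i \<in> flat_exp_comb (Q i)"
    and diff: "\<And>x. coord_prod F differentiable (at x)"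
    and fd: "\<And>j x. j \<in> Basis \<Longrightarrow> frechet_derivative (coord_prod F) (at x) j = coord_prod (F(j := D j)) x"
    using coord_prod_flat_exp_comb_derivative[OF Suc.prems] by blast
  have "Ck_fun n (coord_prod (F(j := D j)))" if "j \<in> Basis" for j
    using Suc.prems D that by (intro Suc.IH) auto
  then show ?case using diff fd by simp
qed

lemma flat_exp_1: "flat_exp 1 s = (if 0 < s then exp (- 1 / s) else 0)"
  by (simp add: flat_exp_def)

definition box_bump :: "'a::euclidean_space \<Rightarrow> 'a \<Rightarrow> nat \<Rightarrow> 'a \<Rightarrow> real" where
  "box_bump a b n = coord_prod (\<lambda>i t. flat_exp 1 ((real n + 1) * ((t - a \<bullet> i) * (b \<bullet> i - t))))"

lemma smooth_box_bump: "smooth_fun (box_bump a b n)"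
  unfolding smooth_fun_def box_bump_def
proof
  fix k
  let ?q = "\<lambda>i. smult (real n + 1) ([:- (a \<bullet> i), 1:] * [:b \<bullet> i, -1:])"
  have eq: "(\<lambda>t. flat_exp 1 (poly (?q i) t) * poly 1 t)
      = (\<lambda>t. flat_exp 1 ((real n + 1) * ((t - a \<bullet> i) * (b \<bullet> i - t))))" for i
    by (simp add: algebra_simps)
  have "(\<lambda>t. flat_exp 1 ((real n + 1) * ((t - a \<bullet> i) * (b \<bullet> i - t)))) \<in> flat_exp_comb (?q i)"
    for i
    using flat_exp_comb.flat_exp_combI[where q = "?q i" and P = 1 and R = 1] unfolding eq .
  then show "Ck_fun k (coord_prod (\<lambda>i t. flat_exp 1 ((real n + 1) * ((t - a \<bullet> i) * (b \<bullet> i - t)))))"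
    by (intro Ck_fun_coord_prod ballI)
qed

lemma continuous_on_box_bump: "continuous_on UNIV (box_bump a b n)"
  using smooth_box_bump[of a b n] Ck_fun.simps(1) unfolding smooth_fun_def by blast

lemma box_bump_measurable: "box_bump a b n \<in> borel_measurable lebesgue"
proof -
  have "box_bump a b n \<in> borel_measurable (lebesgue_on UNIV)"
    by (rule continuous_imp_measurable_on_sets_lebesgue[OF continuous_on_box_bump]) simp
  then show ?thesis by (simp add: lebesgue_on_UNIV_eq)
qed

lemma box_bump_bounds: "0 \<le> box_bump a b n x" "box_bump a b n x \<le> 1"
  unfolding box_bump_def coord_prod_def by (auto intro!: prod_nonneg prod_le_1 simp: flat_exp_1)

lemma box_bump_nonzero_imp_mem_box:
  assumes "\<forall>i\<in>Basis. a \<bullet> i < b \<bullet> i" "box_bump a b n x \<noteq> 0"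
  shows "x \<in> box a b"
proof -
  have nz: "flat_exp 1 ((real n + 1) * ((x \<bullet> i - a \<bullet> i) * (b \<bullet> i - x \<bullet> i))) \<noteq> 0" if "i \<in> Basis" for i
    using assms(2) that unfolding box_bump_def coord_prod_def by auto
  have "0 < (real n + 1) * ((x \<bullet> i - a \<bullet> i) * (b \<bullet> i - x \<bullet> i))" if "i \<in> Basis" for i
    using nz[OF that] by (auto simp: flat_exp_1 split: if_split_asm)
  then have "a \<bullet> i < x \<bullet> i \<and> x \<bullet> i < b \<bullet> i" if "i \<in> Basis" for i
    using that assms(1) by (fastforce simp: zero_less_mult_iff)
  then show ?thesis by (simp add: mem_box)
qed

lemma test_function_box_bump:
  assumes "\<forall>i\<in>Basis. a \<bullet> i < b \<bullet> i" "cbox a b \<subseteq> \<Omega>"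
  shows "test_function \<Omega> (box_bump a b n)"
proof -
  have "{x. box_bump a b n x \<noteq> 0} \<subseteq> cbox a b"
    using box_bump_nonzero_imp_mem_box[OF assms(1)] box_subset_cbox by blast
  then have "closure {x. box_bump a b n x \<noteq> 0} \<subseteq> cbox a b"
    by (rule closure_minimal[OF _ closed_cbox])
  moreover then have "compact (closure {x. box_bump a b n x \<noteq> 0})"
    by (meson bounded_cbox bounded_subset compact_eq_bounded_closed closed_closure)
  ultimately show ?thesis
    using assms(2) smooth_box_bump unfolding test_function_def by blast
qed

lemma box_bump_tendsto_indicator:
  assumes "\<forall>i\<in>Basis. a \<bullet> i < b \<bullet> i"
  shows "(\<lambda>n. box_bump a b n x) \<longlonglongrightarrow> indicator (box a b) x"
proof (cases "x \<in> box a b")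
  case True
  have "(\<lambda>n. flat_exp 1 ((real n + 1) * c)) \<longlonglongrightarrow> 1" if "0 < c" for c :: real
  proof -
    have "(\<lambda>n. - (inverse (real n + 1) * inverse c)) \<longlonglongrightarrow> - (0 * inverse c)"
      by (intro tendsto_intros) (use LIMSEQ_inverse_real_of_nat in \<open>simp add: add.commute\<close>)
    then have "(\<lambda>n. exp (- 1 / ((real n + 1) * c))) \<longlonglongrightarrow> exp 0"
      by (intro tendsto_exp) (simp add: field_simps)
    then show ?thesis using that by (simp add: flat_exp_1)
  qed
  moreover have "0 < (x \<bullet> i - a \<bullet> i) * (b \<bullet> i - x \<bullet> i)" if "i \<in> Basis" for i
    using True that by (simp add: mem_box)
  ultimately have "(\<lambda>n. \<Prod>i\<in>Basis. flat_exp 1 ((real n + 1) * ((x \<bullet> i - a \<bullet> i) * (b \<bullet> i - x \<bullet> i))))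
      \<longlonglongrightarrow> (\<Prod>i\<in>(Basis::'a set). 1)"
    by (intro tendsto_prod) auto
  then show ?thesis using True by (simp add: box_bump_def coord_prod_def)
next
  case False
  then have "box_bump a b n x = 0" for n
    using box_bump_nonzero_imp_mem_box[OF assms] by blast
  then show ?thesis using False by simp
qed

section \<open>The fundamental lemma of the calculus of variations\<close>

definition locally_integrable_on :: "'a::euclidean_space set \<Rightarrow> ('a \<Rightarrow> 'b::euclidean_space) \<Rightarrow> bool" where
  "locally_integrable_on \<Omega> f \<longleftrightarrow> (\<forall>K. compact K \<longrightarrow> K \<subseteq> \<Omega> \<longrightarrow> set_integrable lebesgue K f)"

lemma borel_sets_imp_lebesgue_sets: "A \<in> sets borel \<Longrightarrow> A \<in> sets lebesgue"
  by (metis sets_completionI_sets sets_lborel)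

lemma integral_box_eq_0_if_test_orthogonal:
  fixes h :: "'a::euclidean_space \<Rightarrow> real"
  assumes loc: "locally_integrable_on \<Omega> h"
    and orth: "\<And>\<psi>. test_function \<Omega> \<psi> \<Longrightarrow> (LINT x:\<Omega>|lebesgue. h x * \<psi> x) = 0"
    and sub: "cbox a b \<subseteq> \<Omega>"
  shows "(LINT x:box a b|lebesgue. h x) = 0"
proof (cases "box a b = {}")
  case True
  then show ?thesis by (simp add: set_lebesgue_integral_def)
next
  case False
  then have ab: "\<forall>i\<in>Basis. a \<bullet> i < b \<bullet> i" by (simp add: box_ne_empty)
  define g where "g x = indicator (cbox a b) x * h x" for x
  have int: "integrable lebesgue g"
    using loc sub unfolding locally_integrable_on_def set_integrable_def g_def by auto
  have "(LINT x:\<Omega>|lebesgue. h x * box_bump a b n x) = (LINT x|lebesgue. g x * box_bump a b n x)" for n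
    unfolding set_lebesgue_integral_def g_def
    using box_bump_nonzero_imp_mem_box[OF ab, of n] box_subset_cbox[of a b] sub
    by (intro Bochner_Integration.integral_cong) (auto simp: indicator_def)
  then have zero: "(LINT x|lebesgue. g x * box_bump a b n x) = 0" for n
    using orth[OF test_function_box_bump[OF ab sub]] by simp
  have "(\<lambda>n. LINT x|lebesgue. g x * box_bump a b n x) \<longlonglongrightarrow> (LINT x|lebesgue. g x * indicator (box a b) x)"
  proof (rule integral_dominated_convergence[where w = "\<lambda>x. \<bar>g x\<bar>"])
    have g: "g \<in> borel_measurable lebesgue" using int by (rule borel_measurable_integrable)
    moreover have "indicat_real (box a b) \<in> borel_measurable lebesgue"
      using lmeasurable_box fmeasurableD borel_measurable_indicator by blast
    ultimately show "(\<lambda>x. g x * indicator (box a b) x) \<in> borel_measurable lebesgue"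
      by (rule borel_measurable_times)
    show "(\<lambda>x. g x * box_bump a b n x) \<in> borel_measurable lebesgue" for n
      using g box_bump_measurable by (rule borel_measurable_times)
    show "integrable lebesgue (\<lambda>x. \<bar>g x\<bar>)" using int by (rule integrable_abs)
    show "AE x in lebesgue. (\<lambda>n. g x * box_bump a b n x) \<longlonglongrightarrow> g x * indicator (box a b) x"
      using box_bump_tendsto_indicator[OF ab] by (intro AE_I2 tendsto_mult tendsto_const)
    show "AE x in lebesgue. norm (g x * box_bump a b n x) \<le> \<bar>g x\<bar>" for n
      using box_bump_bounds[of a b n] by (intro AE_I2) (simp add: abs_mult mult_left_le)
  qed
  moreover have "(LINT x|lebesgue. g x * indicator (box a b) x) = (LINT x:box a b|lebesgue. h x)"
    unfolding set_lebesgue_integral_def g_def using box_subset_cbox[of a b]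
    by (intro Bochner_Integration.integral_cong) (auto simp: indicator_def)
  ultimately show ?thesis using zero by (simp add: LIMSEQ_const_iff)
qed

lemma integral_eq_0_if_box_integrals_eq_0:
  fixes f :: "'a::euclidean_space \<Rightarrow> real"
  assumes int: "integrable lebesgue f" and boxes: "\<And>a b. (LINT x:box a b|lebesgue. f x) = 0"
  shows "integral\<^sup>L lebesgue f = 0"
proof -
  define B where "B n = box (- real n *\<^sub>R One) (real n *\<^sub>R One :: 'a)" for n
  have "x \<in> (\<Union>n. B n)" for x
  proof -
    obtain n where "norm x < real n" using reals_Archimedean2 by blast
    then have "\<bar>x \<bullet> i\<bar> < real n" if "i \<in> Basis" for i
      using Basis_le_norm[OF that, of x] by linarith
    then have "x \<in> B n" by (force simp: B_def mem_box abs_less_iff)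
    then show ?thesis by blast
  qed
  then have UN: "(\<Union>n. B n) = UNIV" by blast
  moreover have "(\<lambda>n. LINT x:B n|lebesgue. f x) \<longlonglongrightarrow> (LINT x:(\<Union>n. B n)|lebesgue. f x)"
  proof (rule set_integral_cont_up)
    show "B n \<in> sets lebesgue" for n by (simp add: B_def borel_sets_imp_lebesgue_sets)
    show "incseq B"
    proof (intro monoI subsetI)
      fix m n :: nat and x assume "m \<le> n" "x \<in> B m"
      moreover have "real m \<le> real n" using \<open>m \<le> n\<close> by simp
      ultimately show "x \<in> B n" by (fastforce simp: B_def mem_box)
    qed
    show "set_integrable lebesgue (\<Union>n. B n) f"
      using int by (simp add: UN set_integrable_def)
  qed
  ultimately have "(\<lambda>n. LINT x:B n|lebesgue. f x) \<longlonglongrightarrow> integral\<^sup>L lebesgue f"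
    by (simp add: set_lebesgue_integral_def)
  then show ?thesis using boxes by (simp add: B_def LIMSEQ_const_iff)
qed

lemma set_integral_eq_0_if_box_integrals_eq_0:
  fixes f :: "'a::euclidean_space \<Rightarrow> real"
  assumes int: "integrable lebesgue f" and boxes: "\<And>a b. (LINT x:box a b|lebesgue. f x) = 0"
    and A: "A \<in> sets borel"
  shows "(LINT x:A|lebesgue. f x) = 0"
proof -
  let ?G = "range (\<lambda>(a, b). box a b :: 'a set)"
  have gen: "sigma_sets UNIV ?G = sets borel"
    by (simp add: borel_eq_box sets_measure_of)
  have "Int_stable ?G"
    by (auto simp: Int_stable_def box_Int_box)
  moreover have "?G \<subseteq> Pow UNIV" by simp
  moreover have "A \<in> sigma_sets UNIV ?G" using A gen by simp
  ultimately show ?thesis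
  proof (induction rule: sigma_sets_induct_disjoint)
    case (basic A)
    then show ?case using boxes by auto
  next
    case empty
    show ?case by (simp add: set_lebesgue_integral_def)
  next
    case (compl A)
    then have "A \<in> sets lebesgue" using gen borel_sets_imp_lebesgue_sets by simp
    then have "(LINT x:(UNIV - A)|lebesgue. f x) = integral\<^sup>L lebesgue f - (LINT x:A|lebesgue. f x)"
      using int integrable_mult_indicator[of A lebesgue f]
      by (simp add: set_lebesgue_integral_def indicator_diff left_diff_distrib)
    then show ?case using compl.IH integral_eq_0_if_box_integrals_eq_0[OF int boxes] by simp
  next
    case (union F)
    then have meas: "F i \<in> sets lebesgue" for i using gen borel_sets_imp_lebesgue_sets by auto
    have "(LINT x:(\<Union>i. F i)|lebesgue. f x) = (\<Sum>i. (LINT x:(F i)|lebesgue. f x))"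
    proof (rule lebesgue_integral_countable_add[OF meas])
      show "F i \<inter> F j = {}" if "i \<noteq> j" for i j
        using union.hyps(1) that by (auto simp: disjoint_family_on_def)
      show "set_integrable lebesgue (\<Union>i. F i) f"
        unfolding set_integrable_def using meas by (intro integrable_mult_indicator int) auto
    qed
    then show ?case using union.IH by simp
  qed
qed

lemma AE_zero_if_box_integrals_eq_0:
  fixes f :: "'a::euclidean_space \<Rightarrow> real"
  assumes int: "integrable lebesgue f" and boxes: "\<And>a b. (LINT x:box a b|lebesgue. f x) = 0"
  shows "AE x in lebesgue. f x = 0"
proof -
  have mf: "f \<in> borel_measurable lebesgue" using int by (rule borel_measurable_integrable)
  have "(LINT x:A|lebesgue. f x) = 0" if A: "A \<in> sets lebesgue" for A
  proof -
    from A obtain S N N' where SN: "A = S \<union> N" "N \<subseteq> N'" "N' \<in> null_sets lborel" "S \<in> sets borel"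
      by (auto elim: sets_completionE)
    have "(LINT x:A|lebesgue. f x) = (LINT x:S|lebesgue. f x)"
    proof (rule set_integral_cong_set)
      show "set_borel_measurable lebesgue A f" "set_borel_measurable lebesgue S f"
        unfolding set_borel_measurable_def using A borel_sets_imp_lebesgue_sets[OF SN(4)] mf
        by (auto intro!: borel_measurable_times borel_measurable_indicator)
      have "AE x in lebesgue. x \<notin> N'" using SN(3) by (intro AE_completion AE_not_in)
      then show "AE x in lebesgue. (x \<in> S) = (x \<in> A)"
        by (rule eventually_mono) (use SN(1,2) in blast)
    qed
    also have "\<dots> = 0"
      using SN(4) by (rule set_integral_eq_0_if_box_integrals_eq_0[OF int boxes])
    finally show ?thesis .
  qed
  then show ?thesis
    using density_unique_real[OF int integrable_zero] by (simp add: set_lebesgue_integral_def)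
qed

lemma AE_zero_on_box_if_test_orthogonal:
  fixes h :: "'a::euclidean_space \<Rightarrow> real"
  assumes loc: "locally_integrable_on \<Omega> h"
    and orth: "\<And>\<psi>. test_function \<Omega> \<psi> \<Longrightarrow> (LINT x:\<Omega>|lebesgue. h x * \<psi> x) = 0"
    and sub: "cbox a b \<subseteq> \<Omega>"
  shows "AE x in lebesgue. x \<in> box a b \<longrightarrow> h x = 0"
proof -
  define f where "f x = indicator (box a b) x * h x" for x
  have "set_integrable lebesgue (cbox a b) h"
    using loc sub unfolding locally_integrable_on_def by auto
  then have "set_integrable lebesgue (box a b) h"
    by (rule set_integrable_subset) (auto simp: box_subset_cbox)
  then have "integrable lebesgue f"
    unfolding f_def set_integrable_def by simp
  moreover have "(LINT x:box c d|lebesgue. f x) = 0" for c d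
  proof -
    define c' :: 'a where "c' = (\<Sum>i\<in>Basis. max (c \<bullet> i) (a \<bullet> i) *\<^sub>R i)"
    define d' :: 'a where "d' = (\<Sum>i\<in>Basis. min (d \<bullet> i) (b \<bullet> i) *\<^sub>R i)"
    have "box c d \<inter> box a b = box c' d'" unfolding c'_def d'_def by (rule box_Int_box)
    then have "(LINT x:box c d|lebesgue. f x) = (LINT x:box c' d'|lebesgue. h x)"
      unfolding set_lebesgue_integral_def f_def
      by (intro Bochner_Integration.integral_cong) (auto simp: indicator_def)
    also have "\<dots> = 0"
    proof (cases "box c' d' = {}")
      case True
      then show ?thesis by (simp add: set_lebesgue_integral_def)
    next
      case False
      then have "\<forall>i\<in>Basis. c' \<bullet> i < d' \<bullet> i" by (simp add: box_ne_empty)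
      then have "cbox c' d' \<subseteq> cbox a b"
        by (auto simp: mem_box c'_def d'_def inner_sum_left inner_Basis if_distrib cong: if_cong)
      with sub show ?thesis by (intro integral_box_eq_0_if_test_orthogonal[OF loc orth]) auto
    qed
    finally show ?thesis .
  qed
  ultimately have "AE x in lebesgue. f x = 0"
    by (rule AE_zero_if_box_integrals_eq_0)
  then show ?thesis
    by (rule eventually_mono) (simp add: f_def indicator_def)
qed

lemma AE_zero_if_test_orthogonal:
  fixes h :: "'a::euclidean_space \<Rightarrow> real"
  assumes "open \<Omega>" and loc: "locally_integrable_on \<Omega> h"
    and orth: "\<And>\<psi>. test_function \<Omega> \<psi> \<Longrightarrow> (LINT x:\<Omega>|lebesgue. h x * \<psi> x) = 0"
  shows "AE x in lebesgue. x \<in> \<Omega> \<longrightarrow> h x = 0"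
proof -
  define T where "T = {box a b | a b. cbox a b \<subseteq> \<Omega>}"
  obtain T' where T': "T' \<subseteq> T" "countable T'" "\<Union>T' = \<Union>T"
    by (rule Lindelof[of T]) (auto simp: T_def)
  have "\<Omega> \<subseteq> \<Union>T"
  proof
    fix x assume "x \<in> \<Omega>"
    with \<open>open \<Omega>\<close> obtain a b where "cbox a b \<subseteq> \<Omega>" "x \<in> box a b"
      by (rule open_contains_cbox)
    then show "x \<in> \<Union>T" by (auto simp: T_def)
  qed
  moreover have "AE x in lebesgue. x \<in> B \<longrightarrow> h x = 0" if "B \<in> T'" for B
    using that T'(1) AE_zero_on_box_if_test_orthogonal[OF loc orth] by (auto simp: T_def)
  then have "AE x in lebesgue. \<forall>B\<in>T'. x \<in> B \<longrightarrow> h x = 0"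
    using T'(2) by (rule AE_ball_countable')
  ultimately show ?thesis
    using T'(3) by (auto elim!: eventually_mono)
qed

lemma locally_integrable_imp_measurable:
  fixes f :: "'a::euclidean_space \<Rightarrow> 'b::euclidean_space"
  assumes "open \<Omega>" and loc: "locally_integrable_on \<Omega> f"
  shows "f \<in> borel_measurable (lebesgue_on \<Omega>)"
proof -
  obtain C :: "nat \<Rightarrow> 'a set" where C: "\<And>n. compact (C n)" "\<And>n. C n \<subseteq> \<Omega>"
    "\<And>n. C n \<subseteq> interior (C (Suc n))" "\<Union>(range C) = \<Omega>"
    by (rule open_Union_compact_subsets[OF \<open>open \<Omega>\<close>]) blast
  have "incseq C"
    using C(3) interior_subset by (intro incseq_SucI) blast
  have "(\<lambda>x. indicator \<Omega> x *\<^sub>R f x) \<in> borel_measurable lebesgue"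
  proof (rule borel_measurable_LIMSEQ_metric)
    show "(\<lambda>x. indicator (C n) x *\<^sub>R f x) \<in> borel_measurable lebesgue" for n
      using loc C(1,2) unfolding locally_integrable_on_def set_integrable_def
      by (blast intro: borel_measurable_integrable)
    show "(\<lambda>n. indicator (C n) x *\<^sub>R f x) \<longlonglongrightarrow> indicator \<Omega> x *\<^sub>R f x" for x
    proof (cases "x \<in> \<Omega>")
      case True
      then obtain N where "x \<in> C N" using C(4) by blast
      then have "\<forall>\<^sub>F n in sequentially. indicator (C n) x *\<^sub>R f x = indicator \<Omega> x *\<^sub>R f x"
        using \<open>incseq C\<close> True unfolding eventually_sequentially incseq_def
        by (auto simp: indicator_def)
      then show ?thesis by (rule tendsto_eventually)
    next
      case False
      then have "x \<notin> C n" for n using C(2) by blast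
      then show ?thesis using False by simp
    qed
  qed
  moreover have "\<Omega> \<in> sets lebesgue" using \<open>open \<Omega>\<close> by simp
  ultimately show ?thesis by (simp add: borel_measurable_restrict_space_iff)
qed

section \<open>Weak gradients\<close>

lemma grad_inner_Basis: "i \<in> Basis \<Longrightarrow> grad f x \<bullet> i = frechet_derivative f (at x) i"
  by (simp add: grad_def inner_sum_left inner_Basis if_distrib[of "\<lambda>c. _ * c"] sum.delta cong: if_cong)

lemma test_function_continuous: "test_function \<Omega> \<psi> \<Longrightarrow> continuous_on UNIV \<psi>"
  by (metis Ck_fun.simps(1) smooth_fun_def test_function_def)

lemma test_function_grad_continuous:
  assumes "test_function \<Omega> \<psi>" "i \<in> Basis"
  shows "continuous_on UNIV (\<lambda>x. grad \<psi> x \<bullet> i)"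
proof -
  have "Ck_fun (Suc (Suc 0)) \<psi>" using assms(1) unfolding test_function_def smooth_fun_def by blast
  then have "\<forall>x. (\<lambda>x. frechet_derivative \<psi> (at x) i) differentiable (at x)" using assms(2) by simp
  then show ?thesis
    using assms(2) by (simp add: grad_inner_Basis differentiable_imp_continuous_on
        differentiable_on_def differentiable_at_withinI)
qed

lemma grad_eq_0_outside_support:
  assumes "x \<notin> closure {x. \<psi> x \<noteq> 0}"
  shows "grad \<psi> x = 0"
proof -
  have "((\<lambda>y. 0) has_derivative (\<lambda>h. 0)) (at x)" by simp
  then have "(\<psi> has_derivative (\<lambda>h. 0)) (at x)"
  proof (rule has_derivative_transform_within_open[where s = "- closure {x. \<psi> x \<noteq> 0}"])
    show "0 = \<psi> y" if "y \<in> - closure {x. \<psi> x \<noteq> 0}" for y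
      using that closure_subset[of "{x. \<psi> x \<noteq> 0}"] by auto
  qed (use assms in auto)
  then have "frechet_derivative \<psi> (at x) = (\<lambda>h. 0)"
    by (simp add: frechet_derivative_at[symmetric])
  then show ?thesis unfolding grad_def by simp
qed

lemma set_integrable_mult_compact_support:
  fixes f \<phi> :: "'a::euclidean_space \<Rightarrow> real"
  assumes loc: "locally_integrable_on \<Omega> f"
    and K: "compact K" "K \<subseteq> \<Omega>" and c: "continuous_on UNIV \<phi>" and z: "\<And>x. x \<notin> K \<Longrightarrow> \<phi> x = 0"
  shows "set_integrable lebesgue \<Omega> (\<lambda>x. f x * \<phi> x)"
proof -
  have Kl: "K \<in> sets lebesgue" using K(1) borel_compact borel_sets_imp_lebesgue_sets by blast
  have "\<phi> \<in> borel_measurable (lebesgue_on K)"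
    by (rule continuous_imp_measurable_on_sets_lebesgue[OF continuous_on_subset[OF c] Kl]) simp
  moreover have "bounded (\<phi> ` K)"
    using compact_continuous_image[OF continuous_on_subset[OF c] K(1)] compact_imp_bounded by blast
  moreover have "set_integrable lebesgue K f" using loc K unfolding locally_integrable_on_def by blast
  ultimately have "(\<lambda>x. \<phi> x * f x) absolutely_integrable_on K"
    by (rule absolutely_integrable_bounded_measurable_product[OF bilinear_times _ Kl])
  moreover have "(\<lambda>x. indicator \<Omega> x *\<^sub>R (f x * \<phi> x)) = (\<lambda>x. indicator K x *\<^sub>R (\<phi> x * f x))"
  proof
    fix x show "indicator \<Omega> x *\<^sub>R (f x * \<phi> x) = indicator K x *\<^sub>R (\<phi> x * f x)"
      using z[of x] K(2) by (cases "x \<in> K") (auto simp: indicator_def)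
  qed
  ultimately show ?thesis unfolding set_integrable_def by simp
qed

lemma set_integrable_mult_test_function:
  assumes "locally_integrable_on \<Omega> h" "test_function \<Omega> \<psi>"
  shows "set_integrable lebesgue \<Omega> (\<lambda>x. h x * \<psi> x)"
  using assms(2) closure_subset[of "{x. \<psi> x \<noteq> 0}"]
  by (intro set_integrable_mult_compact_support[OF assms(1), of "closure {x. \<psi> x \<noteq> 0}"]
      test_function_continuous) (auto simp: test_function_def)

lemma set_integrable_mult_test_grad:
  assumes "locally_integrable_on \<Omega> h" "test_function \<Omega> \<psi>" "i \<in> Basis"
  shows "set_integrable lebesgue \<Omega> (\<lambda>x. h x * (grad \<psi> x \<bullet> i))"
  using assms(2,3) grad_eq_0_outside_support[of _ \<psi>]
  by (intro set_integrable_mult_compact_support[OF assms(1), of "closure {x. \<psi> x \<noteq> 0}"]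
      test_function_grad_continuous) (auto simp: test_function_def)

lemma weak_grad_locally_integrable:
  assumes "weak_grad \<Omega> v g"
  shows "locally_integrable_on \<Omega> v" "locally_integrable_on \<Omega> g"
  using assms unfolding weak_grad_def locally_integrable_on_def by auto

lemma locally_integrable_inner:
  assumes "locally_integrable_on \<Omega> g"
  shows "locally_integrable_on \<Omega> (\<lambda>x. g x \<bullet> i)"
  unfolding locally_integrable_on_def
proof (intro allI impI)
  fix K assume "compact K" "K \<subseteq> \<Omega>"
  with assms have "integrable lebesgue (\<lambda>x. indicator K x *\<^sub>R g x)"
    unfolding locally_integrable_on_def set_integrable_def by blast
  then have "integrable lebesgue (\<lambda>x. (indicator K x *\<^sub>R g x) \<bullet> i)"
    by (rule integrable_inner_left)
  then show "set_integrable lebesgue K (\<lambda>x. g x \<bullet> i)"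
    by (simp add: set_integrable_def)
qed

lemma weak_gradD:
  "weak_grad \<Omega> v g \<Longrightarrow> test_function \<Omega> \<phi> \<Longrightarrow> i \<in> Basis \<Longrightarrow>
    (LINT x:\<Omega>|lebesgue. v x * (grad \<phi> x \<bullet> i)) = - (LINT x:\<Omega>|lebesgue. (g x \<bullet> i) * \<phi> x)"
  unfolding weak_grad_def by blast

lemma weak_grad_add:
  assumes v: "weak_grad \<Omega> v gv" and w: "weak_grad \<Omega> w gw"
  shows "weak_grad \<Omega> (\<lambda>x. v x + w x) (\<lambda>x. gv x + gw x)"
  unfolding weak_grad_def
proof (intro conjI allI impI ballI)
  fix K :: "'a set" assume "compact K \<and> K \<subseteq> \<Omega>"
  then show "set_integrable lebesgue K (\<lambda>x. v x + w x)" "set_integrable lebesgue K (\<lambda>x. gv x + gw x)"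
    using v w unfolding weak_grad_def by (auto intro: set_integral_add)
next
  fix \<phi> i assume \<phi>: "test_function \<Omega> \<phi>" and i: "(i::'a) \<in> Basis"
  note int = set_integrable_mult_test_grad[OF weak_grad_locally_integrable(1) \<phi> i]
    set_integrable_mult_test_function[OF locally_integrable_inner[OF weak_grad_locally_integrable(2)] \<phi>]
  have "(LINT x:\<Omega>|lebesgue. (v x + w x) * (grad \<phi> x \<bullet> i))
      = (LINT x:\<Omega>|lebesgue. v x * (grad \<phi> x \<bullet> i)) + (LINT x:\<Omega>|lebesgue. w x * (grad \<phi> x \<bullet> i))"
    using int(1)[OF v] int(1)[OF w] by (simp add: distrib_right set_integral_add)
  also have "\<dots> = - ((LINT x:\<Omega>|lebesgue. (gv x \<bullet> i) * \<phi> x) + (LINT x:\<Omega>|lebesgue. (gw x \<bullet> i) * \<phi> x))"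
    using weak_gradD[OF v \<phi> i] weak_gradD[OF w \<phi> i] by simp
  also have "\<dots> = - (LINT x:\<Omega>|lebesgue. ((gv x + gw x) \<bullet> i) * \<phi> x)"
    using int(2)[OF v] int(2)[OF w] by (simp add: inner_add_left distrib_right set_integral_add)
  finally show "(LINT x:\<Omega>|lebesgue. (v x + w x) * (grad \<phi> x \<bullet> i))
      = - (LINT x:\<Omega>|lebesgue. ((gv x + gw x) \<bullet> i) * \<phi> x)" .
qed

lemma weak_grad_scaleR:
  assumes v: "weak_grad \<Omega> v gv"
  shows "weak_grad \<Omega> (\<lambda>x. c * v x) (\<lambda>x. c *\<^sub>R gv x)"
  unfolding weak_grad_def
proof (intro conjI allI impI ballI)
  fix K :: "'a set" assume "compact K \<and> K \<subseteq> \<Omega>"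
  then show "set_integrable lebesgue K (\<lambda>x. c * v x)" "set_integrable lebesgue K (\<lambda>x. c *\<^sub>R gv x)"
    using v unfolding weak_grad_def
    by (auto intro: set_integrable_mult_right set_integrable_scaleR_right)
next
  fix \<phi> i assume \<phi>: "test_function \<Omega> \<phi>" and i: "(i::'a) \<in> Basis"
  show "(LINT x:\<Omega>|lebesgue. (c * v x) * (grad \<phi> x \<bullet> i))
      = - (LINT x:\<Omega>|lebesgue. ((c *\<^sub>R gv x) \<bullet> i) * \<phi> x)"
    using weak_gradD[OF v \<phi> i] by (simp add: mult.assoc)
qed

lemma weak_grad_zero: "weak_grad \<Omega> (\<lambda>x. 0) (\<lambda>x. 0)"
  unfolding weak_grad_def by (simp add: set_integrable_def set_lebesgue_integral_def)

lemma weak_grad_sum: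
  assumes "finite I" "\<And>k. k \<in> I \<Longrightarrow> weak_grad \<Omega> (f k) (g k)"
  shows "weak_grad \<Omega> (\<lambda>x. \<Sum>k\<in>I. c k * f k x) (\<lambda>x. \<Sum>k\<in>I. c k *\<^sub>R g k x)"
  using assms
proof (induction I rule: finite_induct)
  case empty
  then show ?case by (simp add: weak_grad_zero)
next
  case (insert a I)
  then show ?case by (simp add: weak_grad_add weak_grad_scaleR)
qed

lemma weak_grad_diff:
  assumes "weak_grad \<Omega> v gv" "weak_grad \<Omega> w gw"
  shows "weak_grad \<Omega> (\<lambda>x. v x - w x) (\<lambda>x. gv x - gw x)"
  using weak_grad_add[OF assms(1) weak_grad_scaleR[OF assms(2), of "-1"]] by simp

lemma weak_grad_unique:
  fixes g1 g2 :: "'a::euclidean_space \<Rightarrow> 'a"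
  assumes "open \<Omega>" and g1: "weak_grad \<Omega> v g1" and g2: "weak_grad \<Omega> v g2"
  shows "AE x in lebesgue. x \<in> \<Omega> \<longrightarrow> g1 x = g2 x"
proof -
  have "AE x in lebesgue. x \<in> \<Omega> \<longrightarrow> g1 x \<bullet> i - g2 x \<bullet> i = 0" if i: "i \<in> Basis" for i
  proof (rule AE_zero_if_test_orthogonal[OF \<open>open \<Omega>\<close>])
    note loc = locally_integrable_inner[OF weak_grad_locally_integrable(2)]
    show "locally_integrable_on \<Omega> (\<lambda>x. g1 x \<bullet> i - g2 x \<bullet> i)"
      using loc[OF g1] loc[OF g2] unfolding locally_integrable_on_def by (auto intro: set_integral_diff)
    fix \<psi> assume \<psi>: "test_function \<Omega> \<psi>"
    have "(LINT x:\<Omega>|lebesgue. (g1 x \<bullet> i - g2 x \<bullet> i) * \<psi> x)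
        = (LINT x:\<Omega>|lebesgue. (g1 x \<bullet> i) * \<psi> x) - (LINT x:\<Omega>|lebesgue. (g2 x \<bullet> i) * \<psi> x)"
      using set_integrable_mult_test_function[OF loc[OF g1] \<psi>]
        set_integrable_mult_test_function[OF loc[OF g2] \<psi>]
      by (simp add: left_diff_distrib set_integral_diff)
    also have "\<dots> = 0" using weak_gradD[OF g1 \<psi> i] weak_gradD[OF g2 \<psi> i] by simp
    finally show "(LINT x:\<Omega>|lebesgue. (g1 x \<bullet> i - g2 x \<bullet> i) * \<psi> x) = 0" .
  qed
  then have "AE x in lebesgue. \<forall>i\<in>Basis. x \<in> \<Omega> \<longrightarrow> g1 x \<bullet> i - g2 x \<bullet> i = 0"
    by (intro AE_finite_allI) auto
  then show ?thesis
    by (rule eventually_mono) (auto intro: euclidean_eqI)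
qed

lemma weak_grad_measurable:
  "open \<Omega> \<Longrightarrow> weak_grad \<Omega> v g \<Longrightarrow> g \<in> borel_measurable (lebesgue_on \<Omega>)"
  by (rule locally_integrable_imp_measurable[OF _ weak_grad_locally_integrable(2)])

lemma weak_grad_square_integrable:
  assumes "open \<Omega>" "v \<in> H1 \<Omega>" "weak_grad \<Omega> v g"
  shows "integrable (lebesgue_on \<Omega>) (\<lambda>x. (norm (g x))\<^sup>2)"
proof -
  have \<Omega>: "\<Omega> \<in> sets lebesgue" using \<open>open \<Omega>\<close> by simp
  obtain g' where g': "weak_grad \<Omega> v g'" "L2_vec \<Omega> g'" using assms(2) unfolding H1_def by blast
  have "integrable (lebesgue_on \<Omega>) (\<lambda>x. (norm (g' x))\<^sup>2)"
    using g'(2) \<Omega> unfolding L2_vec_def by (simp add: set_integrable_def integrable_restrict_space)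
  moreover have "AE x in lebesgue_on \<Omega>. (norm (g x))\<^sup>2 = (norm (g' x))\<^sup>2"
    using weak_grad_unique[OF assms(1,3) g'(1)] \<Omega>
    by (simp add: AE_restrict_space_iff) (auto elim: eventually_mono)
  moreover have "(\<lambda>x. (norm (g x))\<^sup>2) \<in> borel_measurable (lebesgue_on \<Omega>)"
    "(\<lambda>x. (norm (g' x))\<^sup>2) \<in> borel_measurable (lebesgue_on \<Omega>)"
    using weak_grad_measurable[OF assms(1)] assms(3) g'(1) by (auto intro!: borel_measurable_power)
  ultimately show ?thesis using integrable_cong_AE by blast
qed

section \<open>The weighted energy estimate\<close>

definition admissible_weight :: "real \<Rightarrow> (real \<Rightarrow> real) \<Rightarrow> bool" where
  "admissible_weight \<epsilon> mu \<longleftrightarrow> 0 < \<epsilon> \<and> mu 0 = 1 / \<epsilon> \<and> (\<forall>s t. 0 \<le> s \<longrightarrow> s \<le> t \<longrightarrow> mu t \<le> mu s) \<and>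
     (\<forall>t\<ge>0. 0 < mu t \<and> t * mu t \<le> 1)"

lemma admissible_weightD:
  assumes "admissible_weight \<epsilon> mu"
  shows "0 < \<epsilon>" "mu 0 = 1 / \<epsilon>" "\<And>s t. 0 \<le> s \<Longrightarrow> s \<le> t \<Longrightarrow> mu t \<le> mu s"
    "\<And>t. 0 \<le> t \<Longrightarrow> 0 < mu t" "\<And>t. 0 \<le> t \<Longrightarrow> t * mu t \<le> 1"
  using assms unfolding admissible_weight_def by blast+

lemma admissible_weight_le:
  assumes "admissible_weight \<epsilon> mu" "0 \<le> t"
  shows "mu t \<le> 1 / \<epsilon>"
  using admissible_weightD(3)[OF assms(1) order_refl assms(2)] admissible_weightD(2)[OF assms(1)]
  by simp

lemma admissible_weight_energy_le:
  assumes "admissible_weight \<epsilon> mu"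
  shows "mu (norm v) * (norm v)\<^sup>2 \<le> norm v"
proof -
  have "norm v * mu (norm v) \<le> 1" by (rule admissible_weightD(5)[OF assms]) simp
  then have "norm v * (norm v * mu (norm v)) \<le> norm v * 1" by (simp add: mult_left_le)
  then show ?thesis by (simp add: power2_eq_square algebra_simps)
qed

lemma borel_measurable_admissible_weight:
  assumes "admissible_weight \<epsilon> mu" "f \<in> borel_measurable M"
  shows "(\<lambda>x. mu (norm (f x))) \<in> borel_measurable M"
proof -
  have "mono (\<lambda>t. - mu (max 0 t))"
    using admissible_weightD(3)[OF assms(1)] unfolding mono_def by (simp add: max.coboundedI1)
  then have "(\<lambda>x. - mu (max 0 (norm (f x)))) \<in> borel_measurable M"
    by (rule measurable_compose[OF measurable_compose[OF assms(2) borel_measurable_norm]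
          borel_measurable_mono])
  then have "(\<lambda>x. - (- mu (max 0 (norm (f x))))) \<in> borel_measurable M"
    by (rule borel_measurable_uminus)
  then show ?thesis by simp
qed

lemma integrable_weighted_inner:
  fixes p q :: "'a \<Rightarrow> 'b::euclidean_space"
  assumes "integrable M (\<lambda>x. (norm (p x))\<^sup>2)" "integrable M (\<lambda>x. (norm (q x))\<^sup>2)"
    and "p \<in> borel_measurable M" "q \<in> borel_measurable M" "E \<in> borel_measurable M"
    and "\<And>x. \<bar>E x\<bar> \<le> B"
  shows "integrable M (\<lambda>x. E x * (p x \<bullet> q x))"
proof (rule Bochner_Integration.integrable_bound)
  show "integrable M (\<lambda>x. B * ((norm (p x))\<^sup>2 + (norm (q x))\<^sup>2))"
    using assms(1,2) by (intro integrable_mult_right Bochner_Integration.integrable_add)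
  show "(\<lambda>x. E x * (p x \<bullet> q x)) \<in> borel_measurable M"
    using assms(3,4,5) by (intro borel_measurable_times borel_measurable_inner) auto
  show "AE x in M. norm (E x * (p x \<bullet> q x)) \<le> norm (B * ((norm (p x))\<^sup>2 + (norm (q x))\<^sup>2))"
  proof (rule AE_I2)
    fix x
    have "\<bar>p x \<bullet> q x\<bar> \<le> norm (p x) * norm (q x)" by (rule Cauchy_Schwarz_ineq2)
    also have "\<dots> \<le> (norm (p x))\<^sup>2 + (norm (q x))\<^sup>2"
      using sum_squares_bound[of "norm (p x)" "norm (q x)"]
        mult_nonneg_nonneg[OF norm_ge_zero[of "p x"] norm_ge_zero[of "q x"]]
      unfolding power2_eq_square by linarith
    finally have "\<bar>E x\<bar> * \<bar>p x \<bullet> q x\<bar> \<le> B * ((norm (p x))\<^sup>2 + (norm (q x))\<^sup>2)"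
      using assms(6)[of x] by (intro mult_mono) auto
    moreover have "0 \<le> B" using assms(6)[of x] by linarith
    ultimately show "norm (E x * (p x \<bullet> q x)) \<le> norm (B * ((norm (p x))\<^sup>2 + (norm (q x))\<^sup>2))"
      by (simp add: abs_mult)
  qed
qed

lemma AE_norm_scaleR_sum_le:
  assumes "finite I" "\<And>k. k \<in> I \<Longrightarrow> AE x in M. norm (g k x) \<le> C k"
  shows "AE x in M. norm (\<Sum>k\<in>I. c k *\<^sub>R g k x) \<le> (\<Sum>k\<in>I. \<bar>c k\<bar> * C k)"
proof -
  have "AE x in M. \<forall>k\<in>I. norm (g k x) \<le> C k"
    using assms by (intro AE_finite_allI) auto
  then show ?thesis
  proof (rule eventually_mono)
    fix x assume "\<forall>k\<in>I. norm (g k x) \<le> C k"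
    then have "(\<Sum>k\<in>I. norm (c k *\<^sub>R g k x)) \<le> (\<Sum>k\<in>I. \<bar>c k\<bar> * C k)"
      by (intro sum_mono) (simp add: mult_left_mono)
    then show "norm (\<Sum>k\<in>I. c k *\<^sub>R g k x) \<le> (\<Sum>k\<in>I. \<bar>c k\<bar> * C k)"
      by (rule order_trans[OF norm_sum])
  qed
qed

lemma AE_scaleR_sum_eq_0:
  fixes g :: "'i \<Rightarrow> 'x \<Rightarrow> 'v::real_vector"
  assumes "finite I" "\<And>k. k \<in> I \<Longrightarrow> AE x in M. P x \<longrightarrow> g k x = 0"
  shows "AE x in M. P x \<longrightarrow> (\<Sum>k\<in>I. c k *\<^sub>R g k x) = 0"
proof -
  have "AE x in M. \<forall>k\<in>I. P x \<longrightarrow> g k x = 0"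
    using assms by (intro AE_finite_allI) auto
  then show ?thesis by (rule eventually_mono) simp
qed

definition ess_bounded_supported :: "'x measure \<Rightarrow> 'x set \<Rightarrow> ('x \<Rightarrow> 'v::euclidean_space) \<Rightarrow> bool" where
  "ess_bounded_supported N S g \<longleftrightarrow> g \<in> borel_measurable N \<and> (\<exists>C. AE x in N. norm (g x) \<le> C) \<and>
     (AE x in N. x \<notin> S \<longrightarrow> g x = 0)"

lemma ess_bounded_supported_mono:
  "ess_bounded_supported N S g \<Longrightarrow> S \<subseteq> T \<Longrightarrow> ess_bounded_supported N T g"
  unfolding ess_bounded_supported_def by (auto elim!: eventually_mono)

lemma ess_bounded_supported_lebesgue_onI:
  assumes "open \<Omega>" "weak_grad \<Omega> v g" "\<exists>C. AE x in lebesgue. x \<in> \<Omega> \<longrightarrow> norm (g x) \<le> C"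
    "AE x in lebesgue. x \<in> \<Omega> - S \<longrightarrow> g x = 0"
  shows "ess_bounded_supported (lebesgue_on \<Omega>) S g"
  using assms weak_grad_measurable[OF assms(1,2)]
  by (simp add: ess_bounded_supported_def AE_restrict_space_iff imp_conjL)

lemma ess_bounded_supported_sum:
  assumes "finite I" "\<And>k. k \<in> I \<Longrightarrow> ess_bounded_supported N S (g k)"
  shows "ess_bounded_supported N S (\<lambda>x. \<Sum>k\<in>I. c k *\<^sub>R g k x)"
proof -
  obtain C where C: "\<And>k. k \<in> I \<Longrightarrow> AE x in N. norm (g k x) \<le> C k"
    using assms(2) unfolding ess_bounded_supported_def by metis
  have "AE x in N. norm (\<Sum>k\<in>I. c k *\<^sub>R g k x) \<le> (\<Sum>k\<in>I. \<bar>c k\<bar> * C k)"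
    using assms(1) C by (rule AE_norm_scaleR_sum_le)
  moreover have "AE x in N. x \<notin> S \<longrightarrow> (\<Sum>k\<in>I. c k *\<^sub>R g k x) = 0"
    using assms unfolding ess_bounded_supported_def by (intro AE_scaleR_sum_eq_0) auto
  moreover have "g k \<in> borel_measurable N" if "k \<in> I" for k
    using assms(2)[OF that] by (simp add: ess_bounded_supported_def)
  then have "(\<lambda>x. \<Sum>k\<in>I. c k *\<^sub>R g k x) \<in> borel_measurable N"
    by (intro borel_measurable_sum borel_measurable_scaleR borel_measurable_const)
  ultimately show ?thesis unfolding ess_bounded_supported_def by blast
qed

lemma ess_bounded_supported_integrable:
  assumes "finite_measure N" "ess_bounded_supported N S g"
  shows "integrable N (\<lambda>x. norm (g x))" "integrable N (\<lambda>x. (norm (g x))\<^sup>2)"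
proof -
  interpret finite_measure N by fact
  obtain C where g: "g \<in> borel_measurable N" "AE x in N. norm (g x) \<le> C"
    using assms(2) unfolding ess_bounded_supported_def by blast
  then show "integrable N (\<lambda>x. norm (g x))"
    by (intro integrable_const_bound[where B = C]) auto
  show "integrable N (\<lambda>x. (norm (g x))\<^sup>2)"
  proof (rule integrable_const_bound[where B = "C\<^sup>2"])
    show "AE x in N. norm ((norm (g x))\<^sup>2) \<le> C\<^sup>2"
      using g(2) by eventually_elim (simp add: power_mono)
  qed (use g(1) in simp)
qed

text \<open>\<open>\<integral>E|a|\<^sup>2 = \<integral>E a\<cdot>b \<le> (\<integral>E|a|\<^sup>2 + \<integral>E|b|\<^sup>2)/2\<close>.\<close>
lemma weighted_energy_le:
  fixes a b :: "'x \<Rightarrow> 'v::real_inner"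
  assumes int: "integrable M (\<lambda>x. E x * (a x \<bullet> a x))" "integrable M (\<lambda>x. E x * (b x \<bullet> b x))"
      "integrable M (\<lambda>x. E x * (a x \<bullet> b x))"
    and E: "\<And>x. 0 \<le> E x"
    and orth: "(\<integral>x. E x * (a x \<bullet> (a x - b x)) \<partial>M) = 0"
  shows "(\<integral>x. E x * (a x \<bullet> a x) \<partial>M) \<le> (\<integral>x. E x * (b x \<bullet> b x) \<partial>M)"
proof -
  have "(\<integral>x. E x * (a x \<bullet> (a x - b x)) \<partial>M) = (\<integral>x. E x * (a x \<bullet> a x) - E x * (a x \<bullet> b x) \<partial>M)"
    by (simp add: inner_diff_right right_diff_distrib)
  then have aa_ab: "(\<integral>x. E x * (a x \<bullet> a x) \<partial>M) = (\<integral>x. E x * (a x \<bullet> b x) \<partial>M)"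
    using orth int(1,3) by simp
  have pointwise: "E x * (a x \<bullet> b x) \<le> (E x * (a x \<bullet> a x) + E x * (b x \<bullet> b x)) / 2" for x
  proof -
    have "2 * (a x \<bullet> b x) \<le> a x \<bullet> a x + b x \<bullet> b x"
      using inner_ge_zero[of "a x - b x"] by (simp add: inner_diff_left inner_diff_right inner_commute)
    then have "E x * (2 * (a x \<bullet> b x)) \<le> E x * (a x \<bullet> a x + b x \<bullet> b x)"
      using E[of x] by (rule mult_left_mono)
    then show ?thesis by (simp add: algebra_simps)
  qed
  have "(\<integral>x. E x * (a x \<bullet> b x) \<partial>M) \<le> (\<integral>x. (E x * (a x \<bullet> a x) + E x * (b x \<bullet> b x)) / 2 \<partial>M)"
    using int pointwise by (intro integral_mono) auto
  also have "\<dots> = ((\<integral>x. E x * (a x \<bullet> a x) \<partial>M) + (\<integral>x. E x * (b x \<bullet> b x) \<partial>M)) / 2"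
    using int(1,2) by simp
  finally have "(\<integral>x. E x * (a x \<bullet> b x) \<partial>M)
      \<le> ((\<integral>x. E x * (a x \<bullet> a x) \<partial>M) + (\<integral>x. E x * (b x \<bullet> b x) \<partial>M)) / 2" .
  with aa_ab show ?thesis by simp
qed

lemma weighted_energy_le_L1:
  fixes a b w :: "'x \<Rightarrow> 'v::euclidean_space" and mu :: "real \<Rightarrow> real"
  defines "E \<equiv> \<lambda>x. mu (norm (b x + w x))"
  assumes N: "finite_measure N" and weight: "admissible_weight \<epsilon> mu"
    and a: "a \<in> borel_measurable N" "integrable N (\<lambda>x. (norm (a x))\<^sup>2)"
    and b: "ess_bounded_supported N S b" and w: "ess_bounded_supported N U w" and "S \<inter> U = {}"
    and orth: "(\<integral>x. E x * (a x \<bullet> (a x - b x)) \<partial>N) = 0"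
  shows "(\<integral>x. E x * (a x \<bullet> a x) \<partial>N) \<le> (\<integral>x. norm (b x) \<partial>N)"
proof -
  have E: "0 < E x" "\<bar>E x\<bar> \<le> 1 / \<epsilon>" for x
    using admissible_weightD(4)[OF weight, of "norm (b x + w x)"]
      admissible_weight_le[OF weight, of "norm (b x + w x)"] by (simp_all add: E_def)
  have mb: "b \<in> borel_measurable N" using b by (simp add: ess_bounded_supported_def)
  have "w \<in> borel_measurable N" using w by (simp add: ess_bounded_supported_def)
  then have "E \<in> borel_measurable N"
    unfolding E_def using mb by (intro borel_measurable_admissible_weight[OF weight] borel_measurable_add)
  note int = integrable_weighted_inner[OF _ _ _ _ this E(2)]
  note b_L2 = ess_bounded_supported_integrable(2)[OF N b]
  have "(\<integral>x. E x * (a x \<bullet> a x) \<partial>N) \<le> (\<integral>x. E x * (b x \<bullet> b x) \<partial>N)"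
    using int[OF a(2) a(2) a(1) a(1)] int[OF b_L2 b_L2 mb mb] int[OF a(2) b_L2 a(1) mb] E(1) orth
    by (intro weighted_energy_le) (auto intro: less_imp_le)
  also have "\<dots> \<le> (\<integral>x. norm (b x) \<partial>N)"
  proof (rule integral_mono_AE[OF int[OF b_L2 b_L2 mb mb] ess_bounded_supported_integrable(1)[OF N b]])
    have "AE x in N. b x = 0 \<or> w x = 0"
      using b w \<open>S \<inter> U = {}\<close> unfolding ess_bounded_supported_def by (auto elim!: eventually_elim2)
    then show "AE x in N. E x * (b x \<bullet> b x) \<le> norm (b x)"
      by eventually_elim
        (auto simp: E_def admissible_weight_energy_le[OF weight] power2_norm_eq_inner[symmetric])
  qed
  finally show ?thesis .
qed

lemma integral_indicator_le_weighted_energy: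
  fixes a f :: "'x \<Rightarrow> 'v::euclidean_space"
  assumes weight: "admissible_weight \<epsilon> mu" and D: "D \<in> sets N"
    and meas: "a \<in> borel_measurable N" "f \<in> borel_measurable N"
    and int: "integrable N (\<lambda>x. mu (norm (f x)) * (a x \<bullet> a x))"
    and f: "AE x in N. x \<in> D \<longrightarrow> f x = 0"
  shows "(\<integral>x. indicator D x * (norm (a x))\<^sup>2 \<partial>N) \<le> \<epsilon> * (\<integral>x. mu (norm (f x)) * (a x \<bullet> a x) \<partial>N)"
proof -
  have "(\<integral>x. indicator D x * (norm (a x))\<^sup>2 \<partial>N) = (\<integral>x. \<epsilon> * (indicator D x * (mu (norm (f x)) * (a x \<bullet> a x))) \<partial>N)"
  proof (rule integral_cong_AE)
    show "AE x in N. indicator D x * (norm (a x))\<^sup>2 = \<epsilon> * (indicator D x * (mu (norm (f x)) * (a x \<bullet> a x)))"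
      using f by eventually_elim
        (use admissible_weightD(1,2)[OF weight] in \<open>auto simp: indicator_def power2_norm_eq_inner\<close>)
  qed (use D meas borel_measurable_admissible_weight[OF weight meas(2)] in auto)
  also have "\<dots> \<le> \<epsilon> * (\<integral>x. mu (norm (f x)) * (a x \<bullet> a x) \<partial>N)"
  proof -
    have "integrable N (\<lambda>x. indicator D x * (mu (norm (f x)) * (a x \<bullet> a x)))"
      using integrable_mult_indicator[OF D int] by simp
    then have "(\<integral>x. indicator D x * (mu (norm (f x)) * (a x \<bullet> a x)) \<partial>N) \<le> (\<integral>x. mu (norm (f x)) * (a x \<bullet> a x) \<partial>N)"
      using int admissible_weightD(4)[OF weight]
      by (intro integral_mono) (auto simp: indicator_def less_imp_le)
    then show ?thesis using admissible_weightD(1)[OF weight] by simp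
  qed
  finally show ?thesis .
qed

lemma weighted_energy_interior_bound:
  fixes N :: "'x measure" and a b :: "'x \<Rightarrow> 'v::euclidean_space"
    and I :: "'i set" and g :: "'i \<Rightarrow> 'x \<Rightarrow> 'v" and c :: "'i \<Rightarrow> real" and mu :: "real \<Rightarrow> real"
  assumes N: "finite_measure N" and I: "finite I" and weight: "admissible_weight \<epsilon> mu"
    and a: "a \<in> borel_measurable N" "integrable N (\<lambda>x. (norm (a x))\<^sup>2)"
    and b: "ess_bounded_supported N S b" and g: "\<And>k. k \<in> I \<Longrightarrow> ess_bounded_supported N U (g k)"
    and SU: "S \<inter> U = {}" and D: "D \<in> sets N" "D \<inter> (S \<union> U) = {}"
    and G: "\<And>x. G x = b x + (\<Sum>k\<in>I. c k *\<^sub>R g k x)"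
    and orth_G: "(\<integral>x. mu (norm (G x)) * (a x \<bullet> (a x - G x)) \<partial>N) = 0"
    and orth_g: "\<And>k. k \<in> I \<Longrightarrow> (\<integral>x. mu (norm (G x)) * (a x \<bullet> g k x) \<partial>N) = 0"
  shows "(\<integral>x. indicator D x * (norm (a x))\<^sup>2 \<partial>N) \<le> \<epsilon> * (\<integral>x. norm (b x) \<partial>N)"
proof -
  define w where "w x = (\<Sum>k\<in>I. c k *\<^sub>R g k x)" for x
  define E where "E x = mu (norm (b x + w x))" for x
  have "G x = b x + w x" for x by (simp add: G w_def)
  then have orth: "(\<integral>x. E x * (a x \<bullet> (a x - (b x + w x))) \<partial>N) = 0"
    and orth_g: "\<And>k. k \<in> I \<Longrightarrow> (\<integral>x. E x * (a x \<bullet> g k x) \<partial>N) = 0"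
    using orth_G orth_g by (simp_all add: E_def)
  have w: "ess_bounded_supported N U w"
    unfolding w_def[abs_def] using I g by (rule ess_bounded_supported_sum)
  have meas: "b \<in> borel_measurable N" "w \<in> borel_measurable N" "\<And>k. k \<in> I \<Longrightarrow> g k \<in> borel_measurable N"
    using b w g by (auto simp: ess_bounded_supported_def)
  then have mE: "E \<in> borel_measurable N"
    unfolding E_def[abs_def] by (intro borel_measurable_admissible_weight[OF weight] borel_measurable_add)
  have Eb: "\<bar>E x\<bar> \<le> 1 / \<epsilon>" for x
    using admissible_weightD(4)[OF weight, of "norm (b x + w x)"]
      admissible_weight_le[OF weight, of "norm (b x + w x)"] by (simp add: E_def)
  note int = integrable_weighted_inner[OF a(2) _ a(1) _ mE Eb]
  note L2 = ess_bounded_supported_integrable(2)[OF N]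
  have "(\<integral>x. E x * (a x \<bullet> w x) \<partial>N) = (\<integral>x. (\<Sum>k\<in>I. c k * (E x * (a x \<bullet> g k x))) \<partial>N)"
    unfolding w_def by (simp add: inner_sum_right sum_distrib_left algebra_simps)
  also have "\<dots> = (\<Sum>k\<in>I. c k * (\<integral>x. E x * (a x \<bullet> g k x) \<partial>N))"
    using int[OF L2[OF g] meas(3)] by (simp add: Bochner_Integration.integral_sum)
  finally have "(\<integral>x. E x * (a x \<bullet> w x) \<partial>N) = 0" using orth_g by simp
  moreover have "E x * (a x \<bullet> (a x - b x)) = E x * (a x \<bullet> (a x - (b x + w x))) + E x * (a x \<bullet> w x)" for x
    by (simp add: inner_diff_right inner_add_right algebra_simps)
  ultimately have "(\<integral>x. E x * (a x \<bullet> (a x - b x)) \<partial>N) = 0"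
    using orth int[OF a(2) a(1)] int[OF L2[OF b] meas(1)] int[OF L2[OF w] meas(2)]
    by (simp add: inner_diff_right inner_add_right right_diff_distrib distrib_left)
  then have energy: "(\<integral>x. E x * (a x \<bullet> a x) \<partial>N) \<le> (\<integral>x. norm (b x) \<partial>N)"
    unfolding E_def by (rule weighted_energy_le_L1[OF N weight a b w SU])
  have "AE x in N. x \<in> D \<longrightarrow> b x + w x = 0"
    using b w D(2) unfolding ess_bounded_supported_def by (auto elim!: eventually_elim2)
  then have "(\<integral>x. indicator D x * (norm (a x))\<^sup>2 \<partial>N) \<le> \<epsilon> * (\<integral>x. E x * (a x \<bullet> a x) \<partial>N)"
    using weight D(1) a(1) meas int[OF a(2) a(1)] unfolding E_def
    by (intro integral_indicator_le_weighted_energy) auto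
  also have "\<dots> \<le> \<epsilon> * (\<integral>x. norm (b x) \<partial>N)"
    using energy admissible_weightD(1)[OF weight] by simp
  finally show ?thesis .
qed

lemma nbhd_mono: "d \<le> d' \<Longrightarrow> nbhd \<Omega> T d \<subseteq> nbhd \<Omega> T d'"
  unfolding nbhd_def using less_le_trans by blast

lemma set_integral_eq_integral_lebesgue_on:
  fixes f :: "'a::euclidean_space \<Rightarrow> real"
  assumes "\<Omega> \<in> sets lebesgue"
  shows "(LINT x:\<Omega>|lebesgue. f x) = (\<integral>x. f x \<partial>lebesgue_on \<Omega>)"
  using assms by (simp add: set_lebesgue_integral_def integral_restrict_space)

lemma set_integral_subset_eq_integral_lebesgue_on:
  fixes f :: "'a::euclidean_space \<Rightarrow> real"
  assumes "\<Omega> \<in> sets lebesgue" "D \<subseteq> \<Omega>"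
  shows "(LINT x:D|lebesgue. f x) = (\<integral>x. indicator D x * f x \<partial>lebesgue_on \<Omega>)"
proof -
  have "(\<integral>x. indicator D x * f x \<partial>lebesgue_on \<Omega>) = (\<integral>x. indicator \<Omega> x * (indicator D x * f x) \<partial>lebesgue)"
    using assms(1) by (simp add: integral_restrict_space)
  also have "\<dots> = (LINT x:D|lebesgue. f x)"
    unfolding set_lebesgue_integral_def
    by (rule Bochner_Integration.integral_cong) (use assms(2) in \<open>auto simp: indicator_def\<close>)
  finally show ?thesis by simp
qed

theorem lemma2:
  fixes \<Omega> :: "'a::euclidean_space set"
    and \<epsilon> \<eta> \<delta> :: real
    and mu :: "real \<Rightarrow> real"
    and M K :: nat
    and A0 A :: "nat \<Rightarrow> 'a set"
    and u0hat uhat :: "nat \<Rightarrow> real"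
    and V :: "real \<Rightarrow> ('a \<Rightarrow> real) set"
    and chi0 chik :: "real \<Rightarrow> nat \<Rightarrow> 'a \<Rightarrow> real"
    and G0 Gk :: "real \<Rightarrow> nat \<Rightarrow> 'a \<Rightarrow> 'a"
    and phi0 :: "'a \<Rightarrow> real" and Gphi0 :: "'a \<Rightarrow> 'a"
  defines "S \<equiv> (\<Union>m\<in>{1..M}. frontier (A0 m)) - frontier \<Omega>"
  defines "Sd \<equiv> (\<lambda>d. nbhd \<Omega> S d)"
  defines "Ukd \<equiv> (\<lambda>k d. nbhd \<Omega> (frontier (A k)) d)"
  defines "Ud \<equiv> (\<lambda>d. \<Union>k\<in>{1..K}. Ukd k d)"
  defines "Dd \<equiv> (\<lambda>d. \<Omega> - closure (Ud d \<union> Sd d))"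
  defines "Akd \<equiv> (\<lambda>k d. (\<Omega> - closure (Ukd k d)) \<inter> A k)"
  defines "Ad \<equiv> (\<lambda>d. \<Union>k\<in>{1..K}. Akd k d)"
  defines "V0 \<equiv> (\<lambda>d. V d \<inter> H1_0 \<Omega>)"
  defines "u\<delta> \<equiv> (\<lambda>x. (\<Sum>m\<in>{1..M}. u0hat m * chi0 \<delta> m x) + (\<Sum>k\<in>{1..K}. uhat k * chik \<delta> k x))"
  defines "Gu0\<delta> \<equiv> (\<lambda>x. \<Sum>m\<in>{1..M}. u0hat m *\<^sub>R G0 \<delta> m x)"
  defines "Gu\<delta> \<equiv> (\<lambda>x. Gu0\<delta> x + (\<Sum>k\<in>{1..K}. uhat k *\<^sub>R Gk \<delta> k x))"
  \<comment> \<open>domain\<close>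
  assumes dom: "lipschitz_domain \<Omega>" "bounded \<Omega>" "connected \<Omega>" "\<Omega> \<noteq> {}"
  \<comment> \<open>weight\<close>
  assumes eps: "\<epsilon> > 0"
    and mu_mono: "\<And>s t. 0 \<le> s \<Longrightarrow> s \<le> t \<Longrightarrow> mu t \<le> mu s"
    and mu0: "mu 0 = 1 / \<epsilon>"
    and mu_pos: "\<And>t. 0 \<le> t \<Longrightarrow> mu t > 0"
    and mu_bd: "\<And>t. 0 \<le> t \<Longrightarrow> t * mu t \<le> 1"
  \<comment> \<open>background medium\<close>
  assumes A0_open: "\<And>m. m \<in> {1..M} \<Longrightarrow> open (A0 m) \<and> connected (A0 m)"
    and A0_disj: "\<And>m m'. m \<in> {1..M} \<Longrightarrow> m' \<in> {1..M} \<Longrightarrow> m \<noteq> m' \<Longrightarrow> A0 m \<inter> A0 m' = {}"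
    and A0_cover: "closure \<Omega> \<subseteq> closure (\<Union>m\<in>{1..M}. A0 m)"
    and A0_bdry: "\<And>m. m \<in> {1..M} \<Longrightarrow>
                    hausdorff_measure (DIM('a) - 1) (frontier (A0 m) \<inter> frontier \<Omega>) > 0"
  \<comment> \<open>inclusions\<close>
  assumes A_open: "\<And>k. k \<in> {1..K} \<Longrightarrow> open (A k) \<and> connected (A k)"
    and A_cc: "\<And>k. k \<in> {1..K} \<Longrightarrow> compact (closure (A k)) \<and> closure (A k) \<subseteq> \<Omega> - S"
    and uhat_nz: "\<And>k. k \<in> {1..K} \<Longrightarrow> uhat k \<noteq> 0"
    and A_bdry_disj: "\<And>k j. k \<in> {1..K} \<Longrightarrow> j \<in> {1..K} \<Longrightarrow> k \<noteq> j \<Longrightarrow>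
                         frontier (A k) \<inter> frontier (A j) = {}"
  \<comment> \<open>standing assumptions on eta\<close>
  assumes eta: "\<eta> > 0"
    and eta_A: "\<And>k. k \<in> {1..K} \<Longrightarrow> Akd k \<eta> \<noteq> {}"
    and eta_SU: "closure (Sd \<eta>) \<inter> closure (Ud \<eta>) = {}"
    and eta_UU: "\<And>k j. k \<in> {1..K} \<Longrightarrow> j \<in> {1..K} \<Longrightarrow> k \<noteq> j \<Longrightarrow>
                    closure (Ukd k \<eta>) \<inter> closure (Ukd j \<eta>) = {}"
    and eta_comp: "\<And>E. E \<in> components (Dd \<eta> - Ad \<eta>) \<Longrightarrow>
                    hausdorff_measure (DIM('a) - 1) (frontier E \<inter> frontier \<Omega>) > 0"
  \<comment> \<open>approximation spaces and approximate characteristic functions\<close>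
  assumes V_sub: "\<And>d. d > 0 \<Longrightarrow> closed_H1_subspace \<Omega> (V d)"
    and chi0_V: "\<And>d m. d > 0 \<Longrightarrow> m \<in> {1..M} \<Longrightarrow> chi0 d m \<in> V d"
    and chik_V: "\<And>d k. d > 0 \<Longrightarrow> k \<in> {1..K} \<Longrightarrow> chik d k \<in> V0 d"
    and chi0_lim: "\<And>m. m \<in> {1..M} \<Longrightarrow>
       ((\<lambda>d. LINT x:\<Omega>|lebesgue. (chi0 d m x - indicator (A0 m) x)\<^sup>2) \<longlongrightarrow> 0) (at_right 0)"
    and chik_lim: "\<And>k. k \<in> {1..K} \<Longrightarrow>
       ((\<lambda>d. LINT x:\<Omega>|lebesgue. (chik d k x - indicator (A k) x)\<^sup>2) \<longlongrightarrow> 0) (at_right 0)"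
  \<comment> \<open>gradients of the approximate characteristic functions, for 0 < d <= eta\<close>
  assumes G0_grad: "\<And>d m. d \<in> {0<..\<eta>} \<Longrightarrow> m \<in> {1..M} \<Longrightarrow> weak_grad \<Omega> (chi0 d m) (G0 d m)"
    and G0_Linf: "\<And>d m. d \<in> {0<..\<eta>} \<Longrightarrow> m \<in> {1..M} \<Longrightarrow>
                    \<exists>C. AE x in lebesgue. x \<in> \<Omega> \<longrightarrow> norm (G0 d m x) \<le> C"
    and G0_supp: "\<And>d m. d \<in> {0<..\<eta>} \<Longrightarrow> m \<in> {1..M} \<Longrightarrow>
                    AE x in lebesgue. x \<in> \<Omega> - closure (Sd d) \<longrightarrow> G0 d m x = 0"
    and Gk_grad: "\<And>d k. d \<in> {0<..\<eta>} \<Longrightarrow> k \<in> {1..K} \<Longrightarrow> weak_grad \<Omega> (chik d k) (Gk d k)"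
    and Gk_Linf: "\<And>d k. d \<in> {0<..\<eta>} \<Longrightarrow> k \<in> {1..K} \<Longrightarrow>
                    \<exists>C. AE x in lebesgue. x \<in> \<Omega> \<longrightarrow> norm (Gk d k x) \<le> C"
    and Gk_supp: "\<And>d k. d \<in> {0<..\<eta>} \<Longrightarrow> k \<in> {1..K} \<Longrightarrow>
                    AE x in lebesgue. x \<in> \<Omega> - closure (Ukd k d) \<longrightarrow> Gk d k x = 0"
  \<comment> \<open>the weighted Dirichlet problem at the given delta\<close>
  assumes delta: "\<delta> \<in> {0<..\<eta>}"
    and phi0_V: "phi0 \<in> V \<delta>"
    and phi0_grad: "weak_grad \<Omega> phi0 Gphi0"
    and phi0_eq: "\<And>v gv. v \<in> V0 \<delta> \<Longrightarrow> weak_grad \<Omega> v gv \<Longrightarrow>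
                    (LINT x:\<Omega>|lebesgue. mu (norm (Gu\<delta> x)) * (Gphi0 x \<bullet> gv x)) = 0"
    and phi0_bc: "(\<lambda>x. phi0 x - u\<delta> x) \<in> V0 \<delta>"
  shows "(LINT x:Dd \<delta>|lebesgue. (norm (Gphi0 x))\<^sup>2) \<le> \<epsilon> * (LINT x:\<Omega>|lebesgue. norm (Gu0\<delta> x))"
proof -
  have "open \<Omega>" using dom(1) unfolding lipschitz_domain_def by blast
  then have \<Omega>: "\<Omega> \<in> sets lebesgue" "finite_measure (lebesgue_on \<Omega>)"
    using dom(2) by (simp_all add: finite_measure_lebesgue_on lmeasurable_open)
  have \<delta>: "0 < \<delta>" "\<delta> \<le> \<eta>" using delta by auto
  have wG0: "weak_grad \<Omega> (\<lambda>x. \<Sum>m\<in>{1..M}. u0hat m * chi0 \<delta> m x) Gu0\<delta>"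
    unfolding Gu0\<delta>_def using G0_grad[OF delta] by (intro weak_grad_sum) auto
  have "weak_grad \<Omega> (\<lambda>x. \<Sum>k\<in>{1..K}. uhat k * chik \<delta> k x) (\<lambda>x. \<Sum>k\<in>{1..K}. uhat k *\<^sub>R Gk \<delta> k x)"
    using Gk_grad[OF delta] by (intro weak_grad_sum) auto
  then have wu: "weak_grad \<Omega> (\<lambda>x. phi0 x - u\<delta> x) (\<lambda>x. Gphi0 x - Gu\<delta> x)"
    unfolding u\<delta>_def Gu\<delta>_def by (intro weak_grad_diff[OF phi0_grad] weak_grad_add[OF wG0])
  have "Sd \<delta> \<subseteq> Sd \<eta>" "Ud \<delta> \<subseteq> Ud \<eta>"
    using nbhd_mono[OF \<delta>(2)] unfolding Sd_def Ud_def Ukd_def by blast+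
  then have SU: "closure (Sd \<delta>) \<inter> closure (Ud \<delta>) = {}"
    using eta_SU closure_mono by blast
  have "(\<integral>x. indicator (Dd \<delta>) x * (norm (Gphi0 x))\<^sup>2 \<partial>lebesgue_on \<Omega>)
      \<le> \<epsilon> * (\<integral>x. norm (Gu0\<delta> x) \<partial>lebesgue_on \<Omega>)"
  proof (rule weighted_energy_interior_bound[OF \<Omega>(2) finite_atLeastAtMost _ _ _ _ _ SU])
    show "admissible_weight \<epsilon> mu"
      using eps mu_mono mu0 mu_pos mu_bd unfolding admissible_weight_def by blast
    show "Gphi0 \<in> borel_measurable (lebesgue_on \<Omega>)"
      using \<open>open \<Omega>\<close> phi0_grad by (rule weak_grad_measurable)
    show "integrable (lebesgue_on \<Omega>) (\<lambda>x. (norm (Gphi0 x))\<^sup>2)"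
      using V_sub[OF \<delta>(1)] phi0_V unfolding closed_H1_subspace_def
      by (intro weak_grad_square_integrable[OF \<open>open \<Omega>\<close> _ phi0_grad]) blast
    show "ess_bounded_supported (lebesgue_on \<Omega>) (closure (Sd \<delta>)) Gu0\<delta>"
      unfolding Gu0\<delta>_def using \<open>open \<Omega>\<close> G0_grad[OF delta] G0_Linf[OF delta] G0_supp[OF delta]
      by (intro ess_bounded_supported_sum ess_bounded_supported_lebesgue_onI) auto
    show "ess_bounded_supported (lebesgue_on \<Omega>) (closure (Ud \<delta>)) (Gk \<delta> k)" if "k \<in> {1..K}" for k
    proof (rule ess_bounded_supported_mono)
      show "ess_bounded_supported (lebesgue_on \<Omega>) (closure (Ukd k \<delta>)) (Gk \<delta> k)"
        using Gk_grad[OF delta that] Gk_Linf[OF delta that] Gk_supp[OF delta that]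
        by (rule ess_bounded_supported_lebesgue_onI[OF \<open>open \<Omega>\<close>])
      show "closure (Ukd k \<delta>) \<subseteq> closure (Ud \<delta>)"
        using that unfolding Ud_def by (intro closure_mono) blast
    qed
    show "Dd \<delta> \<in> sets (lebesgue_on \<Omega>)"
      using \<Omega>(1) \<open>open \<Omega>\<close> unfolding Dd_def
      by (simp add: sets_restrict_space_iff borel_sets_imp_lebesgue_sets)
    show "Dd \<delta> \<inter> (closure (Sd \<delta>) \<union> closure (Ud \<delta>)) = {}"
      by (auto simp: Dd_def closure_Un)
    show "Gu\<delta> x = Gu0\<delta> x + (\<Sum>k\<in>{1..K}. uhat k *\<^sub>R Gk \<delta> k x)" for x
      by (simp add: Gu\<delta>_def)
    show "(\<integral>x. mu (norm (Gu\<delta> x)) * (Gphi0 x \<bullet> (Gphi0 x - Gu\<delta> x)) \<partial>lebesgue_on \<Omega>) = 0"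
      using phi0_eq[OF phi0_bc wu] by (simp add: set_integral_eq_integral_lebesgue_on[OF \<Omega>(1)])
    show "(\<integral>x. mu (norm (Gu\<delta> x)) * (Gphi0 x \<bullet> Gk \<delta> k x) \<partial>lebesgue_on \<Omega>) = 0" if "k \<in> {1..K}" for k
      using phi0_eq[OF chik_V[OF \<delta>(1) that] Gk_grad[OF delta that]]
      by (simp add: set_integral_eq_integral_lebesgue_on[OF \<Omega>(1)])
  qed
  moreover have "Dd \<delta> \<subseteq> \<Omega>" by (auto simp: Dd_def)
  ultimately show ?thesis
    by (simp add: set_integral_eq_integral_lebesgue_on[OF \<Omega>(1)]
        set_integral_subset_eq_integral_lebesgue_on[OF \<Omega>(1)])
qed

end
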